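(* Let $L>0$, $\mu\in(-\infty,0]$, $\kappa:=\mu/L$, and $f\in\mathcal{F}_{\mu,L}(\mathbb{R}^d)$. Define $\bar h(\kappa):=\frac{3}{1+\kappa+\sqrt{1-\kappa+\kappa^2}}\in[\tfrac32,2)$. Let $x_0\in\mathbb{R}^d$, $h_0,\dots,h_{N-1}\in(0,\bar h(\kappa)]$, and $x_{i+1}=x_i-\frac{h_i}{L}\nabla f(x_i)$ for $i=0,\dots,N-1$. Define $$p(h,\kappa)=\begin{cases}2h-h^2\frac{-\kappa}{1-\kappa}, & h\in(0,1],\\[2pt] \frac{h(2-h)(2-\kappa h)}{2-(1+\kappa)h}, & h\in[1,\bar h(\kappa)].\end{cases}$$ Then $$\min_{0\le i\le N}\|\nabla f(x_i)\|^2\le\frac{2L\,[f(x_0)-f(x_N)]}{\sum_{i=0}^{N-1}p(h_i,\kappa)}.$$ Additionally, if $f$ is bounded from below and $f_*:=\inf_{x}f(x)$, then $$\min_{0\le i\le N}\|\nabla f(x_i)\|^2\le\frac{2L\,[f(x_0)-f_*]}{1+\sum_{i=0}^{N-1}p(h_i,\kappa)}.$$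
   Context: For $L>0$ and $\mu\le L$, $\mathcal{F}_{\mu,L}(\mathbb{R}^d)$ denotes the class of differentiable functions $f:\mathbb{R}^d\to\mathbb{R}$ such that both $\frac L2\|\cdot\|^2-f$ and $f-\frac{\mu}{2}\|\cdot\|^2$ are convex. *)

theory Defs
  imports "HOL-Analysis.Analysis"
begin

definition smooth_weakly_convex_class :: "real \<Rightarrow> real \<Rightarrow> ('a::euclidean_space \<Rightarrow> real) \<Rightarrow> bool" where
  "smooth_weakly_convex_class \<mu> L f \<longleftrightarrow>
     (\<forall>x. f differentiable (at x)) \<and>
     convex_on UNIV (\<lambda>x. L / 2 * (norm x)\<^sup>2 - f x) \<and>
     convex_on UNIV (\<lambda>x. f x - \<mu> / 2 * (norm x)\<^sup>2)"

definition hbar :: "real \<Rightarrow> real" where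
  "hbar \<kappa> = 3 / (1 + \<kappa> + sqrt (1 - \<kappa> + \<kappa>\<^sup>2))"

definition pfun :: "real \<Rightarrow> real \<Rightarrow> real" where
  "pfun h \<kappa> = (if h \<le> 1 then 2 * h - h\<^sup>2 * ((- \<kappa>) / (1 - \<kappa>))
                else h * (2 - h) * (2 - \<kappa> * h) / (2 - (1 + \<kappa>) * h))"

end

theory Submission
  imports Defs
begin

text \<open>Along each gradient step the interpolation inequality of the class F_{mu,L} is applied in
  both directions between x_i and x_{i+1}. This gives two linear inequalities in |g x_i|^2,
  |g x_{i+1}|^2 and the inner product of the two gradients; for h <= 1 the forward one suffices,
  while for h > 1 a nonnegative combination of the two eliminates the inner product. Either way
  2 L (f x_i - f x_{i+1}) >= p(h_i, kappa) min(|g x_i|^2, |g x_{i+1}|^2), where the weights are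
  nonnegative because h_i <= hbar kappa, the positive root of kappa h^2 - 2 (1 + kappa) h + 3.
  Summing telescopes to the first bound; for the second, the descent lemma at x_N gives
  inf f <= f x_N - |g x_N|^2 / (2 L).\<close>

lemma convex_on_gradient_inequality:
  fixes F :: "'a::real_inner \<Rightarrow> real"
  assumes convex: "convex_on UNIV F"
    and deriv: "(F has_derivative (\<lambda>v. G \<bullet> v)) (at x)"
  shows "F x + G \<bullet> (y - x) \<le> F y"
proof -
  define k where "k = (\<lambda>t::real. F (x + t *\<^sub>R (y - x)))"
  have "convex_on UNIV k"
  proof (rule convex_onI)
    fix s a b :: real
    assume "0 < s" "s < 1"
    have "x + ((1 - s) *\<^sub>R a + s *\<^sub>R b) *\<^sub>R (y - x)
        = (1 - s) *\<^sub>R (x + a *\<^sub>R (y - x)) + s *\<^sub>R (x + b *\<^sub>R (y - x))"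
      by (simp add: algebra_simps)
    then show "k ((1 - s) *\<^sub>R a + s *\<^sub>R b) \<le> (1 - s) * k a + s * k b"
      unfolding k_def using convex_onD[OF convex, of s] \<open>0 < s\<close> \<open>s < 1\<close> by simp
  qed simp
  moreover have "(k has_field_derivative (G \<bullet> (y - x))) (at 0)"
  proof -
    have "((\<lambda>t. x + t *\<^sub>R (y - x)) has_derivative (\<lambda>t. t *\<^sub>R (y - x))) (at 0)"
      by (auto intro!: derivative_eq_intros)
    moreover have "(F has_derivative (\<lambda>v. G \<bullet> v)) (at (x + 0 *\<^sub>R (y - x)))"
      using deriv by simp
    ultimately have "(k has_derivative (\<lambda>t. G \<bullet> (t *\<^sub>R (y - x)))) (at 0)"
      unfolding k_def by (rule has_derivative_compose)
    then show ?thesis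
      by (simp add: has_field_derivative_def mult.commute[of _ "G \<bullet> (y - x)"])
  qed
  ultimately have "(G \<bullet> (y - x)) * (1 - 0) \<le> k 1 - k 0"
    by (intro convex_on_imp_above_tangent) auto
  then show ?thesis
    unfolding k_def by simp
qed

text \<open>Cocoercivity of the gradient of a convex L-smooth function: compare the lower bound at y
  with the upper bound at x, both evaluated at z = x - (G x - G y) / L.\<close>
lemma smooth_convex_interpolation:
  fixes F :: "'a::real_inner \<Rightarrow> real"
  assumes L_pos: "L > 0"
    and lower: "\<And>x y. F x + G x \<bullet> (y - x) \<le> F y"
    and upper: "\<And>x y. F y \<le> F x + G x \<bullet> (y - x) + L / 2 * (norm (y - x))\<^sup>2"
  shows "F y + G y \<bullet> (x - y) + (norm (G x - G y))\<^sup>2 / (2 * L) \<le> F x"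
proof -
  define D where "D = G x - G y"
  define z where "z = x - (1 / L) *\<^sub>R D"
  have "F y + G y \<bullet> (z - y) \<le> F z"
    by (rule lower)
  also have "F z \<le> F x + G x \<bullet> (z - x) + L / 2 * (norm (z - x))\<^sup>2"
    by (rule upper)
  finally have "F y + G y \<bullet> (x - y) - (G y \<bullet> D) / L
      \<le> F x - (G x \<bullet> D) / L + L / 2 * ((norm D)\<^sup>2 / L\<^sup>2)"
    unfolding z_def using L_pos by (simp add: inner_diff_right power_divide)
  moreover have "(G x \<bullet> D) / L - (G y \<bullet> D) / L = (norm D)\<^sup>2 / L"
    unfolding D_def by (simp add: power2_norm_eq_inner inner_diff_left diff_divide_distrib)
  moreover have "L / 2 * ((norm D)\<^sup>2 / L\<^sup>2) = (norm D)\<^sup>2 / L - (norm D)\<^sup>2 / (2 * L)"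
    using L_pos by (simp add: field_simps power2_eq_square)
  ultimately show ?thesis
    unfolding D_def by linarith
qed

lemma has_derivative_inner_self:
  fixes z :: "'a::real_inner"
  shows "((\<lambda>z. z \<bullet> z) has_derivative (\<lambda>v. 2 * (z \<bullet> v))) (at z)"
  by (auto intro!: derivative_eq_intros simp: inner_commute)

lemma inner_self_expand:
  fixes x y :: "'a::real_inner"
  shows "y \<bullet> y = x \<bullet> x + 2 * (x \<bullet> (y - x)) + (norm (y - x))\<^sup>2"
  by (simp add: power2_norm_eq_inner inner_diff_left inner_diff_right inner_commute)

lemma smooth_weakly_convex_class_descent:
  fixes f :: "'a::euclidean_space \<Rightarrow> real"
  assumes f_class: "smooth_weakly_convex_class \<mu> L f"
    and grad: "\<And>y. (f has_derivative (\<lambda>v. g y \<bullet> v)) (at y)"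
  shows "f y \<le> f x + g x \<bullet> (y - x) + L / 2 * (norm (y - x))\<^sup>2"
proof -
  define P where "P = (\<lambda>z. L / 2 * (z \<bullet> z) - f z)"
  have "convex_on UNIV P"
    using f_class unfolding smooth_weakly_convex_class_def P_def by (simp add: power2_norm_eq_inner)
  moreover have "(P has_derivative (\<lambda>v. (L *\<^sub>R x - g x) \<bullet> v)) (at x)"
    unfolding P_def
    by (rule has_derivative_eq_rhs,
        rule has_derivative_diff[OF has_derivative_mult_right[OF has_derivative_inner_self] grad])
       (auto simp: inner_diff_left)
  ultimately have "P x + (L *\<^sub>R x - g x) \<bullet> (y - x) \<le> P y"
    by (rule convex_on_gradient_inequality)
  then show ?thesis
    unfolding P_def inner_self_expand[of y x] by (simp add: inner_diff_left algebra_simps)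
qed

lemma smooth_weakly_convex_class_interpolation:
  fixes f :: "'a::euclidean_space \<Rightarrow> real"
  assumes mu_less: "\<mu> < L"
    and f_class: "smooth_weakly_convex_class \<mu> L f"
    and grad: "\<And>y. (f has_derivative (\<lambda>v. g y \<bullet> v)) (at y)"
  shows "f y + g y \<bullet> (x - y) + \<mu> / 2 * (norm (x - y))\<^sup>2
           + (norm (g x - g y - \<mu> *\<^sub>R (x - y)))\<^sup>2 / (2 * (L - \<mu>)) \<le> f x"
proof -
  define F where "F = (\<lambda>z. f z - \<mu> / 2 * (z \<bullet> z))"
  define G where "G = (\<lambda>z. g z - \<mu> *\<^sub>R z)"
  have "convex_on UNIV F"
    using f_class unfolding smooth_weakly_convex_class_def F_def by (simp add: power2_norm_eq_inner)
  moreover have "(F has_derivative (\<lambda>v. G z \<bullet> v)) (at z)" for z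
    unfolding F_def G_def
    by (rule has_derivative_eq_rhs,
        rule has_derivative_diff[OF grad has_derivative_mult_right[OF has_derivative_inner_self]])
       (auto simp: inner_diff_left)
  ultimately have lower: "F x + G x \<bullet> (y - x) \<le> F y" for x y
    by (rule convex_on_gradient_inequality)
  have upper: "F y \<le> F x + G x \<bullet> (y - x) + (L - \<mu>) / 2 * (norm (y - x))\<^sup>2" for x y
    using smooth_weakly_convex_class_descent[OF f_class grad, of y x]
    unfolding F_def G_def inner_self_expand[of y x] by (simp add: inner_diff_left field_simps)
  have "F y + G y \<bullet> (x - y) + (norm (G x - G y))\<^sup>2 / (2 * (L - \<mu>)) \<le> F x"
    using mu_less lower upper by (intro smooth_convex_interpolation) auto
  moreover have "G x - G y = g x - g y - \<mu> *\<^sub>R (x - y)"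
    unfolding G_def by (simp add: algebra_simps)
  ultimately show ?thesis
    unfolding F_def G_def inner_self_expand[of x y] by (simp add: inner_diff_left algebra_simps)
qed

lemma smooth_weakly_convex_class_Inf_le:
  fixes f :: "'a::euclidean_space \<Rightarrow> real"
  assumes L_pos: "L > 0"
    and f_class: "smooth_weakly_convex_class \<mu> L f"
    and grad: "\<And>y. (f has_derivative (\<lambda>v. g y \<bullet> v)) (at y)"
    and bounded: "bdd_below (range f)"
  shows "(INF y. f y) \<le> f x - (norm (g x))\<^sup>2 / (2 * L)"
proof -
  define y where "y = x - (1 / L) *\<^sub>R g x"
  have "(INF y. f y) \<le> f y"
    using bounded by (intro cINF_lower) auto
  also have "f y \<le> f x + g x \<bullet> (y - x) + L / 2 * (norm (y - x))\<^sup>2"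
    by (rule smooth_weakly_convex_class_descent[OF f_class grad])
  also have "\<dots> = f x - (norm (g x))\<^sup>2 / (2 * L)"
    unfolding y_def using L_pos by (simp add: field_simps power2_eq_square flip: power2_norm_eq_inner)
  finally show ?thesis .
qed

lemma hbar_denominator_pos:
  fixes K :: real
  assumes "K \<le> 0"
  shows "1 + K + sqrt (1 - K + K\<^sup>2) > 0"
proof (cases "1 + K > 0")
  case True
  moreover have "sqrt (1 - K + K\<^sup>2) \<ge> 0"
    using assms by simp
  ultimately show ?thesis by linarith
next
  case False
  then have "(- (1 + K))\<^sup>2 < 1 - K + K\<^sup>2"
    by (simp add: power2_eq_square algebra_simps)
  then have "- (1 + K) < sqrt (1 - K + K\<^sup>2)"
    using real_less_rsqrt by blast
  then show ?thesis by linarith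
qed

lemma hbar_pos: "K \<le> 0 \<Longrightarrow> hbar K > 0"
  unfolding hbar_def using hbar_denominator_pos by simp

lemma hbar_quadratic_root:
  fixes K :: real
  assumes "K \<le> 0"
  shows "K * (hbar K)\<^sup>2 - 2 * (1 + K) * hbar K + 3 = 0"
proof -
  define D where "D = 1 + K + sqrt (1 - K + K\<^sup>2)"
  have "D > 0"
    unfolding D_def using assms by (rule hbar_denominator_pos)
  have "(D - (1 + K))\<^sup>2 = 1 - K + K\<^sup>2"
    unfolding D_def using assms by simp
  then have "D\<^sup>2 - 2 * (1 + K) * D + 3 * K = 0"
    by (simp add: power2_eq_square algebra_simps)
  moreover have "K * (hbar K)\<^sup>2 - 2 * (1 + K) * hbar K + 3
      = 3 * (D\<^sup>2 - 2 * (1 + K) * D + 3 * K) / D\<^sup>2"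
    unfolding hbar_def D_def[symmetric] using \<open>D > 0\<close> by (simp add: field_simps power2_eq_square)
  ultimately show ?thesis by simp
qed

lemma hbar_quadratic_nonneg:
  fixes K h :: real
  assumes K: "K \<le> 0" and h: "0 \<le> h" "h \<le> hbar K"
  shows "K * h\<^sup>2 - 2 * (1 + K) * h + 3 \<ge> 0"
proof -
  define H where "H = hbar K"
  have "H > 0"
    unfolding H_def using K by (rule hbar_pos)
  have "K * h\<^sup>2 - 2 * (1 + K) * h + 3
      = K * h * (h - H) + 3 * (H - h) / H + h / H * (K * H\<^sup>2 - 2 * (1 + K) * H + 3)"
    using \<open>H > 0\<close> by (simp add: field_simps power2_eq_square)
  also have "\<dots> = K * h * (h - H) + 3 * (H - h) / H"
    unfolding H_def using hbar_quadratic_root[OF K] by simp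
  also have "\<dots> \<ge> 0"
    using K h \<open>H > 0\<close> unfolding H_def[symmetric]
    by (intro add_nonneg_nonneg mult_nonpos_nonpos) (auto simp: mult_nonpos_nonneg)
  finally show ?thesis .
qed

lemma pfun_denominator_pos:
  fixes K h :: real
  assumes K: "K \<le> 0" and h: "0 \<le> h" "h \<le> hbar K"
  shows "2 - (1 + K) * h > 0"
  using hbar_quadratic_nonneg[OF K h] mult_nonpos_nonneg[OF K, of "h\<^sup>2"]
  by (simp add: algebra_simps)

lemma pfun_short_step:
  fixes K h :: real
  assumes "K < 1" and "h \<le> 1"
  shows "(1 - K) * pfun h K = h * (2 * (1 - K) + K * h)"
  using assms by (simp add: pfun_def field_simps power2_eq_square)

lemma pfun_long_step:
  fixes K h :: real
  assumes "1 < h" and "2 - (1 + K) * h \<noteq> 0"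
  shows "(2 - (1 + K) * h) * pfun h K = h * ((K * h\<^sup>2 - 2 * (1 + K) * h + 3) + 1)"
proof -
  have "(2 - (1 + K) * h) * pfun h K = h * ((2 - h) * (2 - K * h))"
    using assms by (simp add: pfun_def)
  then show ?thesis
    by (simp add: power2_eq_square algebra_simps)
qed

lemma pfun_pos:
  fixes K h :: real
  assumes K: "K \<le> 0" and h: "0 < h" "h \<le> hbar K"
  shows "pfun h K > 0"
proof (cases "h \<le> 1")
  case True
  have "K \<le> K * h"
    using mult_left_mono_neg[OF True K] by simp
  moreover have "K < 1"
    using K by simp
  ultimately have "(1 - K) * pfun h K > 0"
    unfolding pfun_short_step[OF \<open>K < 1\<close> True] using K h by (auto intro!: mult_pos_pos)
  then show ?thesis
    using K by (simp add: zero_less_mult_iff)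
next
  case False
  then have "1 < h"
    by simp
  have D_pos: "2 - (1 + K) * h > 0"
    using pfun_denominator_pos K h by simp
  have "h * ((K * h\<^sup>2 - 2 * (1 + K) * h + 3) + 1) > 0"
    using hbar_quadratic_nonneg[OF K _ h(2)] h by (intro mult_pos_pos) auto
  then have "(2 - (1 + K) * h) * pfun h K > 0"
    unfolding pfun_long_step[OF \<open>1 < h\<close> less_imp_neq[OF D_pos, symmetric]] .
  then show ?thesis
    using D_pos by (simp add: zero_less_mult_iff)
qed

lemma pfun_bound_short_step:
  fixes a b c F K h m :: real
  assumes K: "K \<le> 0" and h: "0 < h" "h \<le> 1"
    and forward: "(1 - 2 * K * h + K * h\<^sup>2) * a - 2 * (1 - h) * c + b \<le> F"
    and cauchy: "2 * c \<le> a + b" and m: "m \<le> a" "m \<le> b"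
  shows "(1 - K) * pfun h K * m \<le> F"
proof -
  have "K \<le> K * h"
    using mult_left_mono_neg[OF h(2) K] by simp
  have "(1 - K) * pfun h K * m = h * (2 * (1 - K) + K * h) * m"
    using pfun_short_step[OF _ h(2), of K] K by simp
  also have "\<dots> = h * (1 - 2 * K + K * h) * m + h * m"
    by (simp add: algebra_simps)
  also have "\<dots> \<le> h * (1 - 2 * K + K * h) * a + h * b"
    using h K m \<open>K \<le> K * h\<close> by (intro add_mono mult_left_mono) auto
  also have "\<dots> \<le> (1 - 2 * K * h + K * h\<^sup>2) * a - 2 * (1 - h) * c + b"
    using mult_left_mono[OF cauchy, of "1 - h"] h by (simp add: power2_eq_square algebra_simps)
  finally show ?thesis
    using forward by linarith
qed

lemma pfun_bound_long_step:
  fixes a b c F K h m :: real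
  assumes K: "K \<le> 0" and h: "1 < h" "h \<le> hbar K"
    and forward: "(1 - 2 * K * h + K * h\<^sup>2) * a - 2 * (1 - h) * c + b \<le> F"
    and backward: "(1 - 2 * h + K * h\<^sup>2) * a - 2 * (1 - K * h) * c + b \<le> - F"
    and m: "m \<le> a" "m \<le> b"
  shows "(1 - K) * pfun h K * m \<le> F"
proof -
  define D where "D = 2 - (1 + K) * h"
  define q where "q = K * h\<^sup>2 - 2 * (1 + K) * h + 3"
  have "D > 0"
    unfolding D_def using pfun_denominator_pos K h by simp
  have "q \<ge> 0"
    unfolding q_def using hbar_quadratic_nonneg K h by simp
  text \<open>These weights make the coefficient of c vanish.\<close>
  have "h * (1 - K) * (q * a + b)
      = (D + h - 1) * ((1 - 2 * K * h + K * h\<^sup>2) * a - 2 * (1 - h) * c + b)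
        + (h - 1) * ((1 - 2 * h + K * h\<^sup>2) * a - 2 * (1 - K * h) * c + b)"
    unfolding D_def q_def by (simp add: power2_eq_square algebra_simps)
  also have "\<dots> \<le> (D + h - 1) * F + (h - 1) * (- F)"
    using h \<open>D > 0\<close> forward backward by (intro add_mono mult_left_mono) auto
  also have "\<dots> = D * F"
    by (simp add: algebra_simps)
  finally have "h * (1 - K) * (q * a + b) \<le> D * F" .
  moreover have "h * (1 - K) * ((q + 1) * m) \<le> h * (1 - K) * (q * a + b)"
    using h K m \<open>q \<ge> 0\<close>
    by (intro mult_left_mono) (auto simp: distrib_right intro: add_mono mult_left_mono)
  moreover have "D * pfun h K = h * (q + 1)"
    using pfun_long_step[OF h(1), of K] \<open>D > 0\<close> unfolding D_def q_def by simp
  then have "D * ((1 - K) * pfun h K * m) = h * (1 - K) * ((q + 1) * m)"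
    by (metis mult.commute mult.left_commute)
  ultimately have "D * ((1 - K) * pfun h K * m) \<le> D * F"
    by linarith
  then show ?thesis
    using \<open>D > 0\<close> by simp
qed

lemma pfun_bound_from_interpolation:
  fixes a b c F K h m :: real
  assumes K: "K \<le> 0" and h: "0 < h" "h \<le> hbar K"
    and forward: "(1 - 2 * K * h + K * h\<^sup>2) * a - 2 * (1 - h) * c + b \<le> F"
    and backward: "(1 - 2 * h + K * h\<^sup>2) * a - 2 * (1 - K * h) * c + b \<le> - F"
    and cauchy: "2 * c \<le> a + b" and m: "m \<le> a" "m \<le> b"
  shows "(1 - K) * pfun h K * m \<le> F"
proof (cases "h \<le> 1")
  case True
  show ?thesis
    using pfun_bound_short_step[OF K h(1) True forward cauchy m] .
next
  case False
  then show ?thesis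
    using pfun_bound_long_step[OF K _ h(2) forward backward m] by simp
qed

lemma smooth_weakly_convex_class_gradient_step_interpolation:
  fixes f :: "'a::euclidean_space \<Rightarrow> real"
  assumes L_pos: "L > 0" and mu_less: "\<mu> < L"
    and f_class: "smooth_weakly_convex_class \<mu> L f"
    and grad: "\<And>y. (f has_derivative (\<lambda>v. g y \<bullet> v)) (at y)"
    and step: "x' = x - (h / L) *\<^sub>R g x"
  defines "K \<equiv> \<mu> / L" and "a \<equiv> (norm (g x))\<^sup>2" and "b \<equiv> (norm (g x'))\<^sup>2"
    and "c \<equiv> g x \<bullet> g x'"
  shows "(1 - 2 * K * h + K * h\<^sup>2) * a - 2 * (1 - h) * c + b \<le> 2 * (L - \<mu>) * (f x - f x')"
    and "(1 - 2 * h + K * h\<^sup>2) * a - 2 * (1 - K * h) * c + b \<le> 2 * (L - \<mu>) * (f x' - f x)"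
proof -
  define W where "W = (1 - K * h)\<^sup>2 * a - 2 * (1 - K * h) * c + b"
  have mu_eq: "\<mu> = K * L"
    unfolding K_def using L_pos by simp
  have dx: "x - x' = (h / L) *\<^sub>R g x"
    unfolding step by simp
  have W_eq: "(norm ((1 - K * h) *\<^sub>R g x - g x'))\<^sup>2 = W"
    unfolding W_def a_def b_def c_def power2_norm_eq_inner
    by (simp add: inner_diff_left inner_diff_right inner_commute power2_eq_square algebra_simps)
  have dist: "(norm (x - x'))\<^sup>2 = (h / L)\<^sup>2 * a"
    unfolding dx a_def by (simp add: power_mult_distrib power_divide)
  have fwd_diff: "g x - g x' - \<mu> *\<^sub>R (x - x') = (1 - K * h) *\<^sub>R g x - g x'"
    unfolding dx mu_eq using L_pos by (simp add: algebra_simps)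
  have bwd_diff: "g x' - g x - \<mu> *\<^sub>R (x' - x) = - ((1 - K * h) *\<^sub>R g x - g x')"
    using fwd_diff by (simp add: algebra_simps)
  have "f x' + (h / L) * c + \<mu> / 2 * ((h / L)\<^sup>2 * a) + W / (2 * (L - \<mu>)) \<le> f x"
    using smooth_weakly_convex_class_interpolation[OF mu_less f_class grad, of x' x,
        unfolded fwd_diff W_eq dist]
    unfolding dx c_def by (simp add: inner_commute)
  then have "2 * (L - \<mu>) * ((h / L) * c + \<mu> / 2 * ((h / L)\<^sup>2 * a) + W / (2 * (L - \<mu>)))
      \<le> 2 * (L - \<mu>) * (f x - f x')"
    using mu_less by (intro mult_left_mono) auto
  moreover have "2 * (L - \<mu>) * ((h / L) * c + \<mu> / 2 * ((h / L)\<^sup>2 * a) + W / (2 * (L - \<mu>)))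
      = (1 - 2 * K * h + K * h\<^sup>2) * a - 2 * (1 - h) * c + b"
    unfolding W_def K_def using L_pos mu_less by (simp add: field_simps power2_eq_square)
  ultimately show "(1 - 2 * K * h + K * h\<^sup>2) * a - 2 * (1 - h) * c + b
      \<le> 2 * (L - \<mu>) * (f x - f x')"
    by simp
  have "f x - (h / L) * a + \<mu> / 2 * ((h / L)\<^sup>2 * a) + W / (2 * (L - \<mu>)) \<le> f x'"
    using smooth_weakly_convex_class_interpolation[OF mu_less f_class grad, of x x',
        unfolded bwd_diff norm_minus_cancel W_eq norm_minus_commute[of x' x] dist]
    unfolding minus_diff_eq[of x x', symmetric] dx a_def by (simp add: power2_norm_eq_inner)
  then have "2 * (L - \<mu>) * (- (h / L) * a + \<mu> / 2 * ((h / L)\<^sup>2 * a) + W / (2 * (L - \<mu>)))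
      \<le> 2 * (L - \<mu>) * (f x' - f x)"
    using mu_less by (intro mult_left_mono) auto
  moreover have "2 * (L - \<mu>) * (- (h / L) * a + \<mu> / 2 * ((h / L)\<^sup>2 * a) + W / (2 * (L - \<mu>)))
      = (1 - 2 * h + K * h\<^sup>2) * a - 2 * (1 - K * h) * c + b"
    unfolding W_def K_def using L_pos mu_less by (simp add: field_simps power2_eq_square)
  ultimately show "(1 - 2 * h + K * h\<^sup>2) * a - 2 * (1 - K * h) * c + b
      \<le> 2 * (L - \<mu>) * (f x' - f x)"
    by simp
qed

lemma smooth_weakly_convex_class_gradient_step:
  fixes f :: "'a::euclidean_space \<Rightarrow> real"
  assumes L_pos: "L > 0" and mu_nonpos: "\<mu> \<le> 0"
    and f_class: "smooth_weakly_convex_class \<mu> L f"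
    and grad: "\<And>y. (f has_derivative (\<lambda>v. g y \<bullet> v)) (at y)"
    and h: "0 < h" "h \<le> hbar (\<mu> / L)"
    and step: "x' = x - (h / L) *\<^sub>R g x"
    and m: "m \<le> (norm (g x))\<^sup>2" "m \<le> (norm (g x'))\<^sup>2"
  shows "pfun h (\<mu> / L) * m \<le> 2 * L * (f x - f x')"
proof -
  have K: "\<mu> / L \<le> 0"
    using L_pos mu_nonpos by (simp add: divide_nonpos_pos)
  have mu_less: "\<mu> < L"
    using L_pos mu_nonpos by simp
  have cauchy: "2 * (g x \<bullet> g x') \<le> (norm (g x))\<^sup>2 + (norm (g x'))\<^sup>2"
    using inner_ge_zero[of "g x - g x'"] unfolding power2_norm_eq_inner
    by (simp add: inner_diff_left inner_diff_right inner_commute)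
  note interpolation =
    smooth_weakly_convex_class_gradient_step_interpolation[OF L_pos mu_less f_class grad step]
  have "(1 - \<mu> / L) * pfun h (\<mu> / L) * m \<le> 2 * (L - \<mu>) * (f x - f x')"
  proof (rule pfun_bound_from_interpolation[OF K h interpolation(1) _ cauchy m])
    show "(1 - 2 * h + \<mu> / L * h\<^sup>2) * (norm (g x))\<^sup>2 - 2 * (1 - \<mu> / L * h) * (g x \<bullet> g x')
        + (norm (g x'))\<^sup>2 \<le> - (2 * (L - \<mu>) * (f x - f x'))"
      using interpolation(2) unfolding minus_mult_right minus_diff_eq .
  qed
  also have "\<dots> = (1 - \<mu> / L) * (2 * L * (f x - f x'))"
    using L_pos by (simp add: field_simps)
  finally show ?thesis
    using K by simp
qed

theorem theorem4p2:
  fixes f :: "'a::euclidean_space \<Rightarrow> real"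
    and g :: "'a \<Rightarrow> 'a"
    and L \<mu> :: real and N :: nat
    and h :: "nat \<Rightarrow> real" and x :: "nat \<Rightarrow> 'a"
  assumes N_pos: "N \<ge> 1"
    and L_pos: "L > 0"
    and mu_nonpos: "\<mu> \<le> 0"
    and f_class: "smooth_weakly_convex_class \<mu> L f"
    and grad: "\<And>y. (f has_derivative (\<lambda>v. g y \<bullet> v)) (at y)"
    and steps: "\<And>i. i < N \<Longrightarrow> 0 < h i \<and> h i \<le> hbar (\<mu> / L)"
    and iter: "\<And>i. i < N \<Longrightarrow> x (Suc i) = x i - (h i / L) *\<^sub>R g (x i)"
  shows "(MIN i\<in>{0..N}. (norm (g (x i)))\<^sup>2)
           \<le> 2 * L * (f (x 0) - f (x N)) / (\<Sum>i<N. pfun (h i) (\<mu> / L))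
         \<and> (bdd_below (range f) \<longrightarrow>
         (MIN i\<in>{0..N}. (norm (g (x i)))\<^sup>2)
           \<le> 2 * L * (f (x 0) - (INF y. f y)) / (1 + (\<Sum>i<N. pfun (h i) (\<mu> / L))))"
proof -
  define m where "m = (MIN i\<in>{0..N}. (norm (g (x i)))\<^sup>2)"
  define S where "S = (\<Sum>i<N. pfun (h i) (\<mu> / L))"
  have K: "\<mu> / L \<le> 0"
    using L_pos mu_nonpos by (simp add: divide_nonpos_pos)
  have m_le: "m \<le> (norm (g (x i)))\<^sup>2" if "i \<le> N" for i
    unfolding m_def using that by (intro Min_le) auto
  have "pfun (h i) (\<mu> / L) * m \<le> 2 * L * (f (x i) - f (x (Suc i)))" if "i < N" for i
    using that steps[OF that] m_le[of i] m_le[of "Suc i"]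
    by (intro smooth_weakly_convex_class_gradient_step[OF L_pos mu_nonpos f_class grad _ _ iter[OF that]])
      auto
  then have "m * S \<le> (\<Sum>i<N. 2 * L * (f (x i) - f (x (Suc i))))"
    unfolding S_def sum_distrib_left by (intro sum_mono) (simp add: mult.commute)
  also have "\<dots> = 2 * L * (f (x 0) - f (x N))"
    using sum_lessThan_telescope'[of "\<lambda>i. f (x i)" N] by (simp flip: sum_distrib_left)
  finally have telescoped: "m * S \<le> 2 * L * (f (x 0) - f (x N))" .
  have "S > 0"
    unfolding S_def using N_pos steps pfun_pos[OF K] by (intro sum_pos) (auto simp: lessThan_empty_iff)
  moreover have "m * (1 + S) \<le> 2 * L * (f (x 0) - (INF y. f y))" if "bdd_below (range f)"
    using telescoped m_le[of N] L_pos
      smooth_weakly_convex_class_Inf_le[OF L_pos f_class grad that, of "x N"]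
    by (simp add: field_simps)
  ultimately show ?thesis
    using telescoped unfolding m_def[symmetric] S_def[symmetric] by (simp add: pos_le_divide_eq)
qed

end
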